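(* Let $n,p\ge1$, let $\mathbf{X}\in\mathbb{R}^{n\times p}$ be fixed, $\beta^0\in\mathbb{R}^p$, and $\mathbf{Y}=\mathbf{X}\beta^0+\varepsilon$ with $\varepsilon_1,\ldots,\varepsilon_n$ i.i.d., $\mathbb{E}[\varepsilon_i]=0$, $\mathrm{Var}(\varepsilon_i)=\sigma^2\in(0,\infty)$. Let $\lambda>0$ and $\hat\beta=(\hat\Sigma+\lambda I_p)^{-1}n^{-1}\mathbf{X}^T\mathbf{Y}$. Assume $\Omega_{\min}(\lambda)>0$ and $$\lambda\,\Omega_{\min}(\lambda)^{-1/2}\,\|\theta^0\|_2\le n^{-1/2}\sigma\,\lambda_{\min\neq0}(\hat\Sigma).$$ Then $\max_{1\le j\le p}\big(\mathbb{E}[\hat\beta_j]-\theta^0_j\big)^2\le\min_{1\le j\le p}\mathrm{Var}(\hat\beta_j)$.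
   Context: $\hat\Sigma=n^{-1}\mathbf{X}^T\mathbf{X}$; $P_{\mathbf{X}}=\mathbf{X}^T(\mathbf{X}\mathbf{X}^T)^{-}\mathbf{X}$ (Moore–Penrose pseudo-inverse), the orthogonal projection onto the row space of $\mathbf{X}$; $\theta^0=P_{\mathbf{X}}\beta^0$. $\Omega(\lambda)=(\hat\Sigma+\lambda I_p)^{-1}\hat\Sigma(\hat\Sigma+\lambda I_p)^{-1}$, $\Omega_{\min}(\lambda)=\min_j\Omega_{jj}(\lambda)$. $\lambda_{\min\neq0}(A)$ is the smallest nonzero eigenvalue of a symmetric matrix $A$. (The displayed condition is the paper's condition $\lambda\Omega_{\min}(\lambda)^{-1/2}\le n^{-1/2}\sigma\|\theta^0\|_2^{-1}\lambda_{\min\neq0}(\hat\Sigma)$ multiplied through by $\|\theta^0\|_2$.) *)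

theory Defs
  imports "HOL-Analysis.Analysis" "HOL-Probability.Probability"
begin

definition mp_pinv :: "real^'n^'m \<Rightarrow> real^'m^'n" where
  "mp_pinv A = (THE G. A ** G ** A = A \<and> G ** A ** G = G \<and>
       transpose (A ** G) = A ** G \<and> transpose (G ** A) = G ** A)"

definition proj_rows :: "real^'p^'n \<Rightarrow> real^'p^'p" where
  "proj_rows X = transpose X ** mp_pinv (X ** transpose X) ** X"

definition Sigma_hat :: "real^'p^'n \<Rightarrow> real^'p^'p" where
  "Sigma_hat X = (1 / real CARD('n)) *\<^sub>R (transpose X ** X)"

definition Omega_mat :: "real^'p^'n \<Rightarrow> real \<Rightarrow> real^'p^'p" where
  "Omega_mat X lam = matrix_inv (Sigma_hat X + lam *\<^sub>R mat 1) ** Sigma_hat X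
                      ** matrix_inv (Sigma_hat X + lam *\<^sub>R mat 1)"

definition Omega_min :: "real^'p^'n \<Rightarrow> real \<Rightarrow> real" where
  "Omega_min X lam = Min (range (\<lambda>j. Omega_mat X lam $ j $ j))"

definition lambda_min_nonzero :: "real^'p^'p \<Rightarrow> real" where
  "lambda_min_nonzero A = Min {\<mu>. \<mu> \<noteq> 0 \<and> (\<exists>v. v \<noteq> 0 \<and> A *v v = \<mu> *\<^sub>R v)}"

definition ridge_est :: "real^'p^'n \<Rightarrow> real \<Rightarrow> real^'n \<Rightarrow> real^'p" where
  "ridge_est X lam Y = matrix_inv (Sigma_hat X + lam *\<^sub>R mat 1)
                        *v ((1 / real CARD('n)) *\<^sub>R (transpose X *v Y))"

end

theory Submission
  imports Defs
begin

text \<open>The ridge estimator is affine in the noise: with the gain matrix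
  L = (1/n) (Sigma_hat + lam I)^-1 X^T it equals L X beta0 + L eps. For centred, uncorrelated
  errors of variance sigma^2 this gives Var(betahat_j) = sigma^2 (L L^T)_jj = sigma^2 Omega_jj / n,
  while X theta0 = X beta0 turns the bias into E betahat - theta0 = - lam (Sigma_hat + lam I)^-1 theta0.
  This vector lies in the orthogonal complement of the kernel of Sigma_hat, on which Sigma_hat
  dominates its smallest nonzero eigenvalue mu; testing the resolvent equation against it gives
  mu |(Sigma_hat + lam I)^-1 theta0| <= |theta0|, and the hypothesis turns this into the bound
  sigma^2 Omega_min / n <= Var(betahat_k) on every squared bias component.\<close>

lemma (in prob_space) cross_moment_indep_centered:
  fixes e :: "'i \<Rightarrow> 'a \<Rightarrow> real"
  assumes indep: "indep_vars (\<lambda>_. borel) e UNIV"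
    and meas: "\<And>i. e i \<in> borel_measurable M"
    and sq: "\<And>i. integrable M (\<lambda>\<omega>. (e i \<omega>)\<^sup>2)"
    and mean: "\<And>i. expectation (e i) = 0"
    and var: "\<And>i. variance (e i) = s"
  shows "integrable M (\<lambda>\<omega>. e i \<omega> * e k \<omega>)"
    and "expectation (\<lambda>\<omega>. e i \<omega> * e k \<omega>) = (if i = k then s else 0)"
proof -
  have int: "integrable M (e i)" for i
    by (rule square_integrable_imp_integrable[OF meas sq])
  have "integrable M (\<lambda>\<omega>. e i \<omega> * e k \<omega>) \<and>
        expectation (\<lambda>\<omega>. e i \<omega> * e k \<omega>) = (if i = k then s else 0)"
  proof (cases "i = k")
    case True
    then show ?thesis
      using sq[of i] var[of i] mean[of i] by (simp add: power2_eq_square)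
  next
    case False
    have pair: "indep_vars (\<lambda>_. borel) e {i, k}"
      by (rule indep_vars_subset[OF indep]) auto
    have "expectation (\<lambda>\<omega>. \<Prod>j\<in>{i, k}. e j \<omega>) = (\<Prod>j\<in>{i, k}. expectation (e j))"
      and "integrable M (\<lambda>\<omega>. \<Prod>j\<in>{i, k}. e j \<omega>)"
      using pair int by (auto intro: indep_vars_lebesgue_integral indep_vars_integrable)
    then show ?thesis using False mean by simp
  qed
  then show "integrable M (\<lambda>\<omega>. e i \<omega> * e k \<omega>)"
    and "expectation (\<lambda>\<omega>. e i \<omega> * e k \<omega>) = (if i = k then s else 0)"
    by auto
qed

lemma (in prob_space) moments_affine_combination_uncorrelated:
  fixes e :: "'i::finite \<Rightarrow> 'a \<Rightarrow> real"
  assumes int: "\<And>i. integrable M (e i)"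
    and int_cross: "\<And>i k. integrable M (\<lambda>\<omega>. e i \<omega> * e k \<omega>)"
    and mean: "\<And>i. expectation (e i) = 0"
    and cross: "\<And>i k. expectation (\<lambda>\<omega>. e i \<omega> * e k \<omega>) = (if i = k then s else 0)"
  shows "expectation (\<lambda>\<omega>. c + (\<Sum>i\<in>UNIV. a i * e i \<omega>)) = c"
    and "variance (\<lambda>\<omega>. c + (\<Sum>i\<in>UNIV. a i * e i \<omega>)) = s * (\<Sum>i\<in>UNIV. (a i)\<^sup>2)"
proof -
  show mean_comb: "expectation (\<lambda>\<omega>. c + (\<Sum>i\<in>UNIV. a i * e i \<omega>)) = c"
    using int mean by (simp add: prob_space)
  have "(\<lambda>\<omega>. (c + (\<Sum>i\<in>UNIV. a i * e i \<omega>) - c)\<^sup>2) =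
        (\<lambda>\<omega>. \<Sum>i\<in>UNIV. \<Sum>k\<in>UNIV. a i * a k * (e i \<omega> * e k \<omega>))"
    by (simp add: power2_eq_square sum_product algebra_simps)
  then have "variance (\<lambda>\<omega>. c + (\<Sum>i\<in>UNIV. a i * e i \<omega>)) =
      (\<Sum>i\<in>UNIV. \<Sum>k\<in>UNIV. a i * a k * expectation (\<lambda>\<omega>. e i \<omega> * e k \<omega>))"
    using int_cross by (simp add: mean_comb)
  also have "\<dots> = s * (\<Sum>i\<in>UNIV. (a i)\<^sup>2)"
    by (simp add: cross if_distrib sum_distrib_left power2_eq_square mult_ac cong: if_cong)
  finally show "variance (\<lambda>\<omega>. c + (\<Sum>i\<in>UNIV. a i * e i \<omega>)) = s * (\<Sum>i\<in>UNIV. (a i)\<^sup>2)" .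
qed

lemma invertible_matrix_inv:
  assumes "invertible A"
  shows "A ** matrix_inv A = mat 1" and "matrix_inv A ** A = mat 1"
  using someI_ex[OF assms[unfolded invertible_def]] by (simp_all add: matrix_inv_def)

lemma inner_matrix_vector_transpose:
  "((A::real^'n^'m) *v x) \<bullet> y = x \<bullet> (transpose A *v y)"
  by (metis dot_lmul_matrix inner_commute transpose_matrix_vector)

lemma transpose_add: "transpose (A + B) = transpose A + transpose (B::'a::comm_semiring_1^'n^'m)"
  by (simp add: transpose_def vec_eq_iff)

lemma transpose_diff: "transpose (A - B) = transpose A - transpose (B::'a::comm_ring_1^'n^'m)"
  by (simp add: transpose_def vec_eq_iff)

lemma transpose_matrix_inv_symmetric:
  fixes A :: "real^'n^'n"
  assumes "transpose A = A" and "invertible A"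
  shows "transpose (matrix_inv A) = matrix_inv A"
proof -
  have "transpose (matrix_inv A) ** A = mat 1"
    using invertible_matrix_inv(1)[OF assms(2)] assms(1) by (metis matrix_transpose_mul transpose_mat)
  then have "transpose (matrix_inv A) = matrix_inv A ** A ** matrix_inv A"
    by (metis invertible_matrix_inv(1,2)[OF assms(2)] matrix_mul_assoc matrix_mul_lid matrix_mul_rid)
  then show ?thesis
    by (simp add: invertible_matrix_inv(2)[OF assms(2)])
qed

lemma invertible_if_ker_trivial:
  fixes A :: "real^'n^'n"
  assumes "\<And>x. A *v x = 0 \<Longrightarrow> x = 0"
  shows "invertible A"
  using assms invertible_left_inverse matrix_left_invertible_ker by blast

lemma invertible_psd_plus_scalar:
  fixes S :: "real^'n^'n"
  assumes psd: "\<And>x. 0 \<le> (S *v x) \<bullet> x" and "lam > 0"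
  shows "invertible (S + lam *\<^sub>R mat 1)"
proof (rule invertible_if_ker_trivial)
  fix x assume "(S + lam *\<^sub>R mat 1) *v x = 0"
  then have "(S *v x + lam *\<^sub>R x) \<bullet> x = 0"
    by (simp add: matrix_vector_mult_add_rdistrib flip: scaleR_matrix_vector_assoc)
  then have "(S *v x) \<bullet> x + lam * (x \<bullet> x) = 0"
    by (simp only: inner_add_left inner_scaleR_left)
  then have "lam * (x \<bullet> x) \<le> 0" using psd[of x] by linarith
  then have "x \<bullet> x \<le> 0" using \<open>lam > 0\<close> by (simp add: mult_le_0_iff)
  then show "x = 0" by (metis antisym inner_ge_zero inner_eq_zero_iff)
qed

lemma matrix_mul_scaleR_right: "A ** (k *\<^sub>R B) = k *\<^sub>R (A ** B)"
  for A :: "real^'n^'m"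
  by (simp add: matrix_scalar_ac scalar_matrix_assoc)

definition penrose :: "real^'n^'m \<Rightarrow> real^'m^'n \<Rightarrow> bool" where
  "penrose A G \<longleftrightarrow> A ** G ** A = A \<and> G ** A ** G = G \<and>
     transpose (A ** G) = A ** G \<and> transpose (G ** A) = G ** A"

lemma penrose_unique:
  assumes "penrose A G" and "penrose A H"
  shows "G = H"
proof -
  have g1: "A ** G ** A = A" and g2: "G ** A ** G = G"
    and g3: "transpose (A ** G) = A ** G" and g4: "transpose (G ** A) = G ** A"
    and h1: "A ** H ** A = A" and h2: "H ** A ** H = H"
    and h3: "transpose (A ** H) = A ** H" and h4: "transpose (H ** A) = H ** A"
    using assms by (simp_all add: penrose_def)
  have tG: "transpose A = transpose A ** transpose G ** transpose A"
    by (metis g1 matrix_transpose_mul matrix_mul_assoc)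
  have tH: "transpose A = transpose A ** transpose H ** transpose A"
    by (metis h1 matrix_transpose_mul matrix_mul_assoc)
  have "G = G ** (transpose G ** transpose A)"
    by (metis g2 g3 matrix_transpose_mul matrix_mul_assoc)
  also have "\<dots> = G ** ((transpose G ** transpose A) ** (transpose H ** transpose A))"
    by (metis tH matrix_mul_assoc)
  also have "\<dots> = G ** A ** H"
    by (metis g2 g3 h3 matrix_transpose_mul matrix_mul_assoc)
  finally have G: "G = G ** A ** H" .
  have "H = (transpose A ** transpose H) ** H"
    by (metis h2 h4 matrix_transpose_mul matrix_mul_assoc)
  also have "\<dots> = ((transpose A ** transpose G) ** (transpose A ** transpose H)) ** H"
    by (metis tG matrix_mul_assoc)
  also have "\<dots> = G ** A ** H"
    by (metis g4 h2 h4 matrix_transpose_mul matrix_mul_assoc)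
  finally show ?thesis using G by simp
qed

lemma penrose_mp_pinv:
  assumes "penrose A G"
  shows "penrose A (mp_pinv A)"
proof -
  have "\<exists>!G. penrose A G" using assms penrose_unique by blast
  from theI'[OF this] show ?thesis by (simp add: mp_pinv_def penrose_def)
qed

lemma outer_sum_matrix_vector:
  "(\<chi> i j. \<Sum>b\<in>Bs. b $ i * b $ j) *v x = (\<Sum>b\<in>Bs. (b \<bullet> x) *\<^sub>R (b :: real^'n))"
proof -
  have "((\<chi> i j. \<Sum>b\<in>Bs. b $ i * b $ j) *v x) $ i = (\<Sum>b\<in>Bs. (b \<bullet> x) * b $ i)" for i
    unfolding matrix_vector_mult_def inner_vec_def
    by (simp add: sum_distrib_left sum_distrib_right mult_ac sum.swap[of _ Bs])
  then show ?thesis by (simp add: vec_eq_iff sum_component)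
qed

lemma orthogonal_projection_matrix_exists:
  fixes N :: "(real^'n) set"
  assumes "subspace N"
  shows "\<exists>K :: real^'n^'n. transpose K = K \<and> (\<forall>x. K *v x \<in> N) \<and> (\<forall>z\<in>N. K *v z = z)
    \<and> (\<forall>x. (\<forall>z\<in>N. x \<bullet> z = 0) \<longrightarrow> K *v x = 0)"
proof -
  obtain Bs where BsN: "Bs \<subseteq> N" and orth: "pairwise orthogonal Bs"
    and unit: "\<And>b. b \<in> Bs \<Longrightarrow> norm b = 1" and indep: "independent Bs" and span: "span Bs = N"
    by (metis orthonormal_basis_subspace[OF assms])
  have fin: "finite Bs" using indep independent_imp_finite by blast
  define K :: "real^'n^'n" where "K = (\<chi> i j. \<Sum>b\<in>Bs. b $ i * b $ j)"
  have Kv: "K *v x = (\<Sum>b\<in>Bs. (b \<bullet> x) *\<^sub>R b)" for x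
    unfolding K_def by (rule outer_sum_matrix_vector)
  have KN: "K *v x \<in> N" for x
    unfolding Kv span[symmetric] by (intro span_sum span_mul span_base)
  have Kb: "(K *v x) \<bullet> b = x \<bullet> b" if b: "b \<in> Bs" for x b
  proof -
    have "(K *v x) \<bullet> b = (\<Sum>b'\<in>Bs. (b' \<bullet> x) * (b' \<bullet> b))"
      by (simp add: Kv inner_sum_left)
    also have "\<dots> = (\<Sum>b'\<in>Bs. if b' = b then b \<bullet> x else 0)"
      using b orth unit[OF b]
      by (intro sum.cong) (auto simp: pairwise_def orthogonal_def dot_square_norm)
    also have "\<dots> = x \<bullet> b" using b fin by (simp add: inner_commute)
    finally show ?thesis .
  qed
  have "transpose K = K" by (simp add: K_def transpose_def vec_eq_iff mult.commute)
  moreover have "K *v z = z" if "z \<in> N" for z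
  proof -
    have "orthogonal (K *v z - z) b" if "b \<in> Bs" for b
      using Kb[OF that] by (simp add: orthogonal_def inner_diff_left)
    moreover have "K *v z - z \<in> span Bs"
      using KN[of z] \<open>z \<in> N\<close> span assms by (simp add: subspace_diff)
    ultimately have "orthogonal (K *v z - z) (K *v z - z)"
      by (rule orthogonal_to_span[rotated])
    then show ?thesis by (simp add: orthogonal_self)
  qed
  moreover have "K *v x = 0" if "\<forall>z\<in>N. x \<bullet> z = 0" for x
    using that BsN by (auto simp: Kv inner_commute intro!: sum.neutral)
  ultimately show ?thesis
    using KN by (intro exI[of _ K]) simp
qed

lemma penrose_inverse_add_minus:
  fixes B K :: "real^'n^'n"
  assumes symK: "transpose K = K" and BK: "\<And>x. B *v (K *v x) = 0" and KB: "\<And>x. K *v (B *v x) = 0"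
    and KK: "\<And>x. K *v (K *v x) = K *v x" and "invertible (B + K)"
  shows "penrose B (matrix_inv (B + K) - K)"
proof -
  define C where "C = B + K"
  define Ci where "Ci = matrix_inv C"
  define G where "G = Ci - K"
  have Cv: "C *v x = B *v x + K *v x" for x by (simp add: C_def matrix_vector_mult_add_rdistrib)
  have CCi: "C *v (Ci *v x) = x" and CiC: "Ci *v (C *v x) = x" for x
    using invertible_matrix_inv[OF \<open>invertible (B + K)\<close>]
    by (simp_all add: C_def Ci_def matrix_vector_mul_assoc)
  have CiK: "Ci *v (K *v x) = K *v x" for x
  proof -
    have "C *v (K *v x) = K *v x" by (simp add: Cv BK KK)
    then show ?thesis using CiC[of "K *v x"] by simp
  qed
  have KCi: "K *v (Ci *v x) = K *v x" for x
  proof -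
    have "K *v x = K *v (C *v (Ci *v x))" by (simp add: CCi)
    also have "\<dots> = K *v (Ci *v x)" by (simp add: Cv matrix_vector_right_distrib KB KK)
    finally show ?thesis by simp
  qed
  have Gv: "G *v x = Ci *v x - K *v x" for x by (simp add: G_def matrix_vector_mult_diff_rdistrib)
  have BG: "B *v (G *v x) = x - K *v x" for x
  proof -
    have "B *v (G *v x) = C *v (Ci *v x) - K *v (Ci *v x)"
      by (simp add: Gv Cv matrix_vector_mult_diff_distrib BK)
    then show ?thesis by (simp add: CCi KCi)
  qed
  have GB: "G *v (B *v x) = x - K *v x" for x
  proof -
    have "G *v (B *v x) = Ci *v (C *v x - K *v x)" by (simp add: Gv KB Cv)
    then show ?thesis by (simp add: matrix_vector_mult_diff_distrib CiC CiK)
  qed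
  have GK: "G *v (K *v x) = 0" for x by (simp add: Gv CiK KK)
  have "B ** G = mat 1 - K" "G ** B = mat 1 - K"
    by (simp_all add: matrix_eq BG GB matrix_vector_mult_diff_rdistrib flip: matrix_vector_mul_assoc)
  moreover have "B ** G ** B = B" "G ** B ** G = G"
    by (simp_all add: matrix_eq BG GB GK BK matrix_vector_mult_diff_distrib
        flip: matrix_vector_mul_assoc)
  moreover have "transpose (mat 1 - K) = mat 1 - K" by (simp add: transpose_diff symK)
  ultimately show ?thesis by (simp add: penrose_def G_def Ci_def C_def)
qed

lemma penrose_exists_symmetric:
  fixes B :: "real^'n^'n"
  assumes sym: "transpose B = B"
  obtains G where "penrose B G"
proof -
  define N where "N = {x. B *v x = 0}"
  have "subspace N"
    unfolding N_def subspace_def by (simp add: matrix_vector_right_distrib matrix_vector_mult_scaleR)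
  then obtain K :: "real^'n^'n" where symK: "transpose K = K" and KN: "\<forall>x. K *v x \<in> N"
    and Kfix: "\<forall>z\<in>N. K *v z = z" and Kperp: "\<forall>x. (\<forall>z\<in>N. x \<bullet> z = 0) \<longrightarrow> K *v x = 0"
    using orthogonal_projection_matrix_exists by blast
  have BK: "B *v (K *v x) = 0" for x using KN by (simp add: N_def)
  have KB: "K *v (B *v x) = 0" for x
    using Kperp sym by (simp add: N_def inner_matrix_vector_transpose)
  have KK: "K *v (K *v x) = K *v x" for x using Kfix KN by simp
  have "invertible (B + K)"
  proof (rule invertible_if_ker_trivial)
    fix x assume "(B + K) *v x = 0"
    then have Bx: "B *v x = - (K *v x)" by (simp add: matrix_vector_mult_add_rdistrib eq_neg_iff_add_eq_0)
    have "(K *v x) \<bullet> (K *v x) = - ((B *v x) \<bullet> (K *v x))" by (simp add: Bx)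
    also have "\<dots> = 0" using sym by (simp add: inner_matrix_vector_transpose BK)
    finally have "K *v x = 0" by simp
    then show "x = 0" using Bx Kfix by (simp add: N_def)
  qed
  then show thesis
    using that penrose_inverse_add_minus[OF symK BK KB KK] by blast
qed

lemma gram_generalized_inverse_cancel:
  fixes X :: "real^'p^'n"
  assumes "X ** transpose X ** G ** (X ** transpose X) = X ** transpose X"
  shows "X ** transpose X ** G ** X = X"
proof -
  define E where "E = X ** transpose X ** G ** X - X"
  have EXt: "E ** transpose X = 0"
    using assms by (simp add: E_def matrix_eq matrix_vector_mult_diff_rdistrib matrix_mul_assoc
        flip: matrix_vector_mul_assoc)
  have "transpose E = transpose X ** (transpose (X ** transpose X ** G) - mat 1)"
    by (simp add: E_def transpose_diff matrix_transpose_mul matrix_eq matrix_vector_mult_diff_distrib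
        matrix_vector_mult_diff_rdistrib flip: matrix_vector_mul_assoc)
  then have "E ** transpose E = 0"
    by (simp add: matrix_mul_assoc EXt)
  then have "row i E \<bullet> row i E = 0" for i
    unfolding matrix_mult_transpose_dot_row by (simp add: vec_eq_iff)
  then have "E = 0" by (simp add: vec_eq_iff row_def)
  then show ?thesis by (simp add: E_def)
qed

lemma matrix_mul_proj_rows: "X ** proj_rows X = X"
proof -
  have sym: "transpose (X ** transpose X) = X ** transpose X"
    by (simp add: matrix_transpose_mul)
  obtain G where "penrose (X ** transpose X) G"
    using penrose_exists_symmetric[OF sym] .
  then have "penrose (X ** transpose X) (mp_pinv (X ** transpose X))"
    by (rule penrose_mp_pinv)
  then have "X ** transpose X ** mp_pinv (X ** transpose X) ** X = X"
    unfolding penrose_def by (intro gram_generalized_inverse_cancel) simp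
  then show ?thesis
    by (simp add: proj_rows_def matrix_mul_assoc)
qed

definition ker_orth :: "real^'n^'m \<Rightarrow> (real^'n) set" where
  "ker_orth A = {v. \<forall>z. A *v z = 0 \<longrightarrow> v \<bullet> z = 0}"

lemma subspace_ker_orth: "subspace (ker_orth A)"
  unfolding ker_orth_def subspace_def by (simp add: inner_add_left)

lemma symmetric_mult_in_ker_orth:
  assumes "transpose S = S"
  shows "S *v x \<in> ker_orth S"
  using assms by (simp add: ker_orth_def inner_matrix_vector_transpose)

lemma rayleigh_min_attained:
  fixes S :: "real^'n^'n"
  assumes "v \<in> ker_orth S" and "v \<noteq> 0"
  obtains x where "x \<in> ker_orth S" and "norm x = 1"
    and "\<And>w. w \<in> ker_orth S \<Longrightarrow> ((S *v x) \<bullet> x) * (w \<bullet> w) \<le> (S *v w) \<bullet> w"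
proof -
  define f where "f y = (S *v y) \<bullet> y" for y
  define Sph where "Sph = ker_orth S \<inter> sphere 0 1"
  have unit: "(1 / norm w) *\<^sub>R w \<in> Sph" if "w \<in> ker_orth S" "w \<noteq> 0" for w
    using that by (simp add: Sph_def subspace_scale[OF subspace_ker_orth])
  have compact: "compact Sph"
    unfolding Sph_def using closed_subspace[OF subspace_ker_orth]
    by (intro closed_Int_compact compact_sphere)
  have nonempty: "Sph \<noteq> {}" using unit assms by blast
  have cont: "continuous_on Sph f"
    unfolding f_def by (intro continuous_intros linear_continuous_on) (simp add: bounded_linear_def)
  obtain x where x: "x \<in> Sph" and minimal: "\<And>y. y \<in> Sph \<Longrightarrow> f x \<le> f y"
    using continuous_attains_inf[OF compact nonempty cont] by blast
  have bound: "f x * (w \<bullet> w) \<le> f w" if w: "w \<in> ker_orth S" for w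
  proof (cases "w = 0")
    case False
    have "f x \<le> f ((1 / norm w) *\<^sub>R w)" by (rule minimal[OF unit[OF w False]])
    also have "\<dots> = f w / (w \<bullet> w)"
      by (simp add: f_def matrix_vector_mult_scaleR dot_square_norm power2_eq_square divide_simps)
    finally show ?thesis using False by (simp add: pos_le_divide_eq)
  qed (simp add: f_def)
  show thesis
  proof (rule that)
    show "x \<in> ker_orth S" and "norm x = 1" using x by (simp_all add: Sph_def)
    show "((S *v x) \<bullet> x) * (w \<bullet> w) \<le> (S *v w) \<bullet> w" if "w \<in> ker_orth S" for w
      using bound[OF that] by (simp add: f_def)
  qed
qed

lemma linear_coeff_zero_if_quadratic_nonneg:
  fixes a b :: real
  assumes nonneg: "\<And>t. 0 \<le> 2 * t * a + t\<^sup>2 * b"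
  shows "a = 0"
proof (rule ccontr)
  assume "a \<noteq> 0"
  define D where "D = \<bar>b\<bar> + 1"
  have D: "D > 0" "b \<le> D - 1" unfolding D_def by auto
  have "0 \<le> 2 * (- a / D) * a + (- a / D)\<^sup>2 * b" by (rule nonneg)
  then have "0 \<le> D\<^sup>2 * (2 * (- a / D) * a + (- a / D)\<^sup>2 * b)" by simp
  also have "\<dots> = - 2 * a\<^sup>2 * D + a\<^sup>2 * b"
    using D by (simp add: field_simps power2_eq_square)
  also have "\<dots> \<le> - (a\<^sup>2 * (D + 1))"
    using mult_left_mono[OF D(2), of "a\<^sup>2"] by (simp add: algebra_simps)
  also have "\<dots> < 0" using \<open>a \<noteq> 0\<close> D by simp
  finally show False by simp
qed

lemma rayleigh_minimizer_stationary:
  fixes S :: "real^'n^'n"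
  assumes sym: "transpose S = S" and x: "x \<in> ker_orth S" "x \<bullet> x = 1"
    and minimal: "\<And>w. w \<in> ker_orth S \<Longrightarrow> ((S *v x) \<bullet> x) * (w \<bullet> w) \<le> (S *v w) \<bullet> w"
    and y: "y \<in> ker_orth S" "y \<bullet> x = 0"
  shows "(S *v x) \<bullet> y = 0"
proof (rule linear_coeff_zero_if_quadratic_nonneg)
  fix t :: real
  define m where "m = (S *v x) \<bullet> x"
  have "x + t *\<^sub>R y \<in> ker_orth S"
    using x y by (simp add: subspace_add[OF subspace_ker_orth] subspace_scale[OF subspace_ker_orth])
  have norm: "(x + t *\<^sub>R y) \<bullet> (x + t *\<^sub>R y) = 1 + t\<^sup>2 * (y \<bullet> y)"
    using x y by (simp add: inner_add_left inner_add_right inner_commute power2_eq_square)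
  have "(S *v y) \<bullet> x = (S *v x) \<bullet> y"
    using inner_matrix_vector_transpose[of S y x] sym by (simp add: inner_commute)
  then have quad: "(S *v (x + t *\<^sub>R y)) \<bullet> (x + t *\<^sub>R y)
      = m + 2 * t * ((S *v x) \<bullet> y) + t\<^sup>2 * ((S *v y) \<bullet> y)"
    by (simp add: m_def matrix_vector_right_distrib matrix_vector_mult_scaleR inner_add_left
        inner_add_right power2_eq_square algebra_simps)
  have "m * (1 + t\<^sup>2 * (y \<bullet> y)) \<le> m + 2 * t * ((S *v x) \<bullet> y) + t\<^sup>2 * ((S *v y) \<bullet> y)"
    using minimal[OF \<open>x + t *\<^sub>R y \<in> ker_orth S\<close>] unfolding norm quad m_def .
  then show "0 \<le> 2 * t * ((S *v x) \<bullet> y) + t\<^sup>2 * ((S *v y) \<bullet> y - ((S *v x) \<bullet> x) * (y \<bullet> y))"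
    by (simp add: m_def algebra_simps)
qed

lemma rayleigh_minimizer_eigenvector:
  fixes S :: "real^'n^'n"
  assumes sym: "transpose S = S" and x: "x \<in> ker_orth S" "x \<bullet> x = 1"
    and minimal: "\<And>w. w \<in> ker_orth S \<Longrightarrow> ((S *v x) \<bullet> x) * (w \<bullet> w) \<le> (S *v w) \<bullet> w"
  shows "S *v x = ((S *v x) \<bullet> x) *\<^sub>R x"
proof -
  define y where "y = S *v x - ((S *v x) \<bullet> x) *\<^sub>R x"
  have "y \<in> ker_orth S"
    using x by (simp add: y_def subspace_diff[OF subspace_ker_orth] subspace_scale[OF subspace_ker_orth]
        symmetric_mult_in_ker_orth[OF sym])
  moreover have "y \<bullet> x = 0" using x by (simp add: y_def inner_diff_left)
  ultimately have "(S *v x) \<bullet> y = 0" by (intro rayleigh_minimizer_stationary[OF sym x minimal])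
  have "y \<bullet> y = (S *v x) \<bullet> y - ((S *v x) \<bullet> x) * (x \<bullet> y)"
    unfolding y_def by (simp add: inner_diff_left)
  also have "\<dots> = 0" using \<open>(S *v x) \<bullet> y = 0\<close> \<open>y \<bullet> x = 0\<close> by (simp add: inner_commute)
  finally show ?thesis by (simp add: y_def)
qed

lemma finite_eigenvalues_symmetric:
  fixes S :: "real^'n^'n"
  assumes sym: "transpose S = S"
  shows "finite {\<mu>. \<exists>v. v \<noteq> 0 \<and> S *v v = \<mu> *\<^sub>R v}"
proof -
  define E where "E = {\<mu>. \<exists>v. v \<noteq> 0 \<and> S *v v = \<mu> *\<^sub>R v}"
  define ev where "ev \<mu> = (SOME v. v \<noteq> 0 \<and> S *v v = \<mu> *\<^sub>R v)" for \<mu>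
  have ev: "ev \<mu> \<noteq> 0" "S *v ev \<mu> = \<mu> *\<^sub>R ev \<mu>" if "\<mu> \<in> E" for \<mu>
    using someI_ex[OF that[unfolded E_def mem_Collect_eq]] by (simp_all add: ev_def)
  have inj: "inj_on ev E"
  proof (rule inj_onI)
    fix \<mu> \<nu> assume \<mu>: "\<mu> \<in> E" and \<nu>: "\<nu> \<in> E" and eq: "ev \<mu> = ev \<nu>"
    have "\<mu> *\<^sub>R ev \<mu> = S *v ev \<mu>" using ev(2)[OF \<mu>] by simp
    also have "\<dots> = \<nu> *\<^sub>R ev \<mu>" using ev(2)[OF \<nu>] eq by simp
    finally show "\<mu> = \<nu>" using ev(1)[OF \<mu>] by simp
  qed
  have orth: "pairwise orthogonal (ev ` E)"
  proof (rule pairwiseI)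
    fix u u' assume "u \<in> ev ` E" "u' \<in> ev ` E" and ne: "u \<noteq> u'"
    then obtain \<mu> \<nu> where \<mu>: "\<mu> \<in> E" and \<nu>: "\<nu> \<in> E" and u: "u = ev \<mu>" "u' = ev \<nu>"
      by blast
    have "\<mu> * (ev \<mu> \<bullet> ev \<nu>) = (S *v ev \<mu>) \<bullet> ev \<nu>" by (simp add: ev(2)[OF \<mu>])
    also have "\<dots> = ev \<mu> \<bullet> (S *v ev \<nu>)" by (simp add: inner_matrix_vector_transpose sym)
    also have "\<dots> = \<nu> * (ev \<mu> \<bullet> ev \<nu>)" by (simp add: ev(2)[OF \<nu>])
    finally have "(\<mu> - \<nu>) * (ev \<mu> \<bullet> ev \<nu>) = 0" by (simp add: algebra_simps)
    moreover have "\<mu> \<noteq> \<nu>" using ne u by auto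
    ultimately show "orthogonal u u'" by (simp add: orthogonal_def u)
  qed
  have "0 \<notin> ev ` E" using ev(1) by force
  then have "finite (ev ` E)"
    using independent_imp_finite pairwise_orthogonal_independent[OF orth] by blast
  then show ?thesis using inj finite_imageD unfolding E_def by blast
qed

lemma lambda_min_nonzero_rayleigh:
  fixes S :: "real^'n^'n"
  assumes sym: "transpose S = S" and psd: "\<And>x. 0 \<le> (S *v x) \<bullet> x"
    and "v \<in> ker_orth S" and "v \<noteq> 0"
  shows "lambda_min_nonzero S > 0"
    and "\<And>w. w \<in> ker_orth S \<Longrightarrow> lambda_min_nonzero S * (w \<bullet> w) \<le> (S *v w) \<bullet> w"
proof -
  obtain x where x: "x \<in> ker_orth S" "norm x = 1"
    and minimal: "\<And>w. w \<in> ker_orth S \<Longrightarrow> ((S *v x) \<bullet> x) * (w \<bullet> w) \<le> (S *v w) \<bullet> w"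
    using rayleigh_min_attained[OF assms(3,4)] by blast
  define m where "m = (S *v x) \<bullet> x"
  have "x \<bullet> x = 1" using x by (simp add: dot_square_norm)
  then have eig: "S *v x = m *\<^sub>R x"
    unfolding m_def using rayleigh_minimizer_eigenvector[OF sym x(1) _ minimal] by simp
  have "x \<noteq> 0" using x by auto
  have "m \<noteq> 0"
    using x \<open>x \<bullet> x = 1\<close> eig by (auto simp: ker_orth_def)
  define E where "E = {\<mu>. \<mu> \<noteq> 0 \<and> (\<exists>v. v \<noteq> 0 \<and> S *v v = \<mu> *\<^sub>R v)}"
  have "finite E"
    by (rule finite_subset[OF _ finite_eigenvalues_symmetric[OF sym]]) (auto simp: E_def)
  moreover have "m \<in> E"
    using \<open>m \<noteq> 0\<close> eig \<open>x \<noteq> 0\<close> unfolding E_def by blast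
  moreover have "lambda_min_nonzero S = Min E"
    by (simp add: lambda_min_nonzero_def E_def)
  ultimately have le: "lambda_min_nonzero S \<le> m" and in_E: "lambda_min_nonzero S \<in> E"
    using Min_in[of E] by (auto simp del: Min_in)
  show "lambda_min_nonzero S > 0"
  proof -
    obtain u where "u \<noteq> 0" "S *v u = lambda_min_nonzero S *\<^sub>R u" "lambda_min_nonzero S \<noteq> 0"
      using in_E by (auto simp: E_def)
    moreover have "0 \<le> (S *v u) \<bullet> u" by (rule psd)
    moreover have "u \<bullet> u > 0" using \<open>u \<noteq> 0\<close> by simp
    ultimately show ?thesis by (simp add: zero_le_mult_iff)
  qed
  show "lambda_min_nonzero S * (w \<bullet> w) \<le> (S *v w) \<bullet> w" if "w \<in> ker_orth S" for w
    using mult_right_mono[OF le inner_ge_zero[of w]] minimal[OF that] by (simp add: m_def)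
qed

lemma Sigma_hat_mult_vector:
  fixes X :: "real^'p^'n"
  shows "Sigma_hat X *v x = (1 / real CARD('n)) *\<^sub>R (transpose X *v (X *v x))"
  by (simp only: Sigma_hat_def matrix_vector_mul_assoc flip: scaleR_matrix_vector_assoc)

lemma inner_Sigma_hat:
  fixes X :: "real^'p^'n"
  shows "(Sigma_hat X *v x) \<bullet> y = (X *v x) \<bullet> (X *v y) / real CARD('n)"
  unfolding Sigma_hat_mult_vector inner_scaleR_left inner_matrix_vector_transpose[of "transpose X"]
  by simp

lemma transpose_Sigma_hat: "transpose (Sigma_hat X) = Sigma_hat X"
  by (simp add: Sigma_hat_def transpose_scalar matrix_transpose_mul)

lemma Sigma_hat_psd: "0 \<le> (Sigma_hat X *v x) \<bullet> x"
  by (simp add: inner_Sigma_hat)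

lemma mult_eq_0_if_Sigma_hat_mult_eq_0: "Sigma_hat X *v z = 0 \<Longrightarrow> X *v z = 0"
  using inner_Sigma_hat[of X z z] by simp

lemma proj_rows_in_ker_orth: "proj_rows X *v b \<in> ker_orth (Sigma_hat X)"
proof -
  have "proj_rows X *v b = transpose X *v (mp_pinv (X ** transpose X) *v (X *v b))"
    by (simp only: proj_rows_def matrix_vector_mul_assoc matrix_mul_assoc)
  then have "(proj_rows X *v b) \<bullet> z = (mp_pinv (X ** transpose X) *v (X *v b)) \<bullet> (X *v z)" for z
    by (simp only: inner_matrix_vector_transpose transpose_transpose)
  then show ?thesis by (simp add: ker_orth_def mult_eq_0_if_Sigma_hat_mult_eq_0)
qed

lemma mult_proj_rows: "X *v (proj_rows X *v b) = X *v b"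
  by (simp add: matrix_vector_mul_assoc matrix_mul_proj_rows)

definition ridge_resolvent :: "real^'p^'n \<Rightarrow> real \<Rightarrow> real^'p^'p" where
  "ridge_resolvent X lam = matrix_inv (Sigma_hat X + lam *\<^sub>R mat 1)"

definition ridge_gain :: "real^'p^'n \<Rightarrow> real \<Rightarrow> real^'n^'p" where
  "ridge_gain X lam = (1 / real CARD('n)) *\<^sub>R (ridge_resolvent X lam ** transpose X)"

lemma ridge_est_eq_gain: "ridge_est X lam Y = ridge_gain X lam *v Y"
  by (simp add: ridge_est_def ridge_gain_def ridge_resolvent_def matrix_vector_mult_scaleR
      flip: matrix_vector_mul_assoc scaleR_matrix_vector_assoc)

lemma Omega_mat_eq: "Omega_mat X lam = ridge_resolvent X lam ** Sigma_hat X ** ridge_resolvent X lam"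
  by (simp add: Omega_mat_def ridge_resolvent_def)

context
  fixes X :: "real^'p^'n" and lam :: real
  assumes lam_pos: "lam > 0"
begin

lemma ridge_resolvent_inverse:
  shows "ridge_resolvent X lam *v (Sigma_hat X *v x + lam *\<^sub>R x) = x"
    and "Sigma_hat X *v (ridge_resolvent X lam *v x) + lam *\<^sub>R (ridge_resolvent X lam *v x) = x"
proof -
  have "invertible (Sigma_hat X + lam *\<^sub>R mat 1)"
    by (rule invertible_psd_plus_scalar[OF Sigma_hat_psd lam_pos])
  note inv = invertible_matrix_inv[OF this, folded ridge_resolvent_def]
  have A: "Sigma_hat X *v y + lam *\<^sub>R y = (Sigma_hat X + lam *\<^sub>R mat 1) *v y" for y
    by (simp add: matrix_vector_mult_add_rdistrib flip: scaleR_matrix_vector_assoc)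
  show "ridge_resolvent X lam *v (Sigma_hat X *v x + lam *\<^sub>R x) = x"
    and "Sigma_hat X *v (ridge_resolvent X lam *v x) + lam *\<^sub>R (ridge_resolvent X lam *v x) = x"
    unfolding A by (simp_all add: matrix_vector_mul_assoc inv)
qed

lemma transpose_ridge_resolvent: "transpose (ridge_resolvent X lam) = ridge_resolvent X lam"
  unfolding ridge_resolvent_def
  by (intro transpose_matrix_inv_symmetric invertible_psd_plus_scalar Sigma_hat_psd lam_pos)
    (simp add: transpose_add transpose_scalar transpose_Sigma_hat)

lemma ridge_gain_gram:
  "ridge_gain X lam ** transpose (ridge_gain X lam) = (1 / real CARD('n)) *\<^sub>R Omega_mat X lam"
proof -
  have "transpose (ridge_gain X lam) = (1 / real CARD('n)) *\<^sub>R (X ** ridge_resolvent X lam)"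
    by (simp add: ridge_gain_def transpose_scalar matrix_transpose_mul transpose_ridge_resolvent)
  then show ?thesis
    by (simp add: Omega_mat_eq ridge_gain_def Sigma_hat_def matrix_mul_scaleR_right matrix_mul_assoc
        flip: scalar_matrix_assoc)
qed

lemma ridge_bias:
  "ridge_gain X lam *v (X *v b) - proj_rows X *v b
     = - lam *\<^sub>R (ridge_resolvent X lam *v (proj_rows X *v b))"
proof -
  define \<theta> where "\<theta> = proj_rows X *v b"
  have "ridge_gain X lam *v (X *v b)
      = ridge_resolvent X lam *v ((1 / real CARD('n)) *\<^sub>R (transpose X *v (X *v b)))"
    by (simp add: ridge_gain_def matrix_vector_mult_scaleR
        flip: scaleR_matrix_vector_assoc matrix_vector_mul_assoc)
  also have "\<dots> = ridge_resolvent X lam *v (Sigma_hat X *v \<theta>)"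
    by (simp only: Sigma_hat_mult_vector \<theta>_def mult_proj_rows)
  also have "\<dots> = ridge_resolvent X lam *v (Sigma_hat X *v \<theta> + lam *\<^sub>R \<theta>)
      - lam *\<^sub>R (ridge_resolvent X lam *v \<theta>)"
    by (simp add: matrix_vector_right_distrib matrix_vector_mult_scaleR)
  also have "\<dots> = \<theta> - lam *\<^sub>R (ridge_resolvent X lam *v \<theta>)"
    by (simp only: ridge_resolvent_inverse)
  finally show ?thesis by (simp add: \<theta>_def)
qed

lemma ridge_resolvent_ker_orth:
  assumes "v \<in> ker_orth (Sigma_hat X)"
  shows "ridge_resolvent X lam *v v \<in> ker_orth (Sigma_hat X)"
  unfolding ker_orth_def
proof (intro CollectI allI impI)
  fix z assume "Sigma_hat X *v z = 0"
  then have "lam *\<^sub>R (ridge_resolvent X lam *v z) = z"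
    using ridge_resolvent_inverse(1)[of z] by (simp add: matrix_vector_mult_scaleR)
  then have "lam * ((ridge_resolvent X lam *v v) \<bullet> z) = v \<bullet> z"
    by (metis inner_matrix_vector_transpose inner_scaleR_right transpose_ridge_resolvent)
  also have "\<dots> = 0"
    using assms \<open>Sigma_hat X *v z = 0\<close> by (simp add: ker_orth_def)
  finally show "(ridge_resolvent X lam *v v) \<bullet> z = 0" using lam_pos by simp
qed

lemma lambda_min_nonzero_mult_norm_ridge_resolvent:
  assumes "v \<in> ker_orth (Sigma_hat X)"
  shows "lambda_min_nonzero (Sigma_hat X) * norm (ridge_resolvent X lam *v v) \<le> norm v"
proof (cases "ridge_resolvent X lam *v v = 0")
  case False
  define w where "w = ridge_resolvent X lam *v v"
  have w: "w \<in> ker_orth (Sigma_hat X)" "w \<noteq> 0"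
    using ridge_resolvent_ker_orth[OF assms] False by (simp_all add: w_def)
  define \<mu> where "\<mu> = lambda_min_nonzero (Sigma_hat X)"
  have "\<mu> * (norm w * norm w) = \<mu> * (w \<bullet> w)" by (simp add: dot_square_norm power2_eq_square)
  also have "\<dots> \<le> (Sigma_hat X *v w) \<bullet> w"
    unfolding \<mu>_def by (rule lambda_min_nonzero_rayleigh(2)[OF transpose_Sigma_hat Sigma_hat_psd w w(1)])
  also have "\<dots> \<le> (Sigma_hat X *v w + lam *\<^sub>R w) \<bullet> w"
    using lam_pos by (simp add: inner_add_left)
  also have "\<dots> = v \<bullet> w" by (simp add: w_def ridge_resolvent_inverse(2))
  also have "\<dots> \<le> norm v * norm w" by (rule norm_cauchy_schwarz)
  finally have "(\<mu> * norm w) * norm w \<le> norm v * norm w" by (simp add: mult.assoc)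
  then show ?thesis
    using w(2) by (simp add: mult_right_le_imp_le w_def \<mu>_def)
qed simp

end

lemma (in prob_space) ridge_est_moments:
  fixes X :: "real^'p^'n" and e :: "'n \<Rightarrow> 'a \<Rightarrow> real"
  assumes "lam > 0" and "indep_vars (\<lambda>_. borel) e UNIV" and "\<And>i. e i \<in> borel_measurable M"
    and "\<And>i. integrable M (\<lambda>\<omega>. (e i \<omega>)\<^sup>2)" and "\<And>i. expectation (e i) = 0"
    and "\<And>i. variance (e i) = s"
  shows "expectation (\<lambda>\<omega>. ridge_est X lam (X *v b + (\<chi> i. e i \<omega>)) $ j)
      = (ridge_gain X lam *v (X *v b)) $ j"
    and "variance (\<lambda>\<omega>. ridge_est X lam (X *v b + (\<chi> i. e i \<omega>)) $ j)
      = s * (Omega_mat X lam $ j $ j / real CARD('n))"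
proof -
  have affine: "ridge_est X lam (X *v b + (\<chi> i. e i \<omega>)) $ j
      = (ridge_gain X lam *v (X *v b)) $ j + (\<Sum>i\<in>UNIV. ridge_gain X lam $ j $ i * e i \<omega>)" for \<omega>
    by (simp add: ridge_est_eq_gain matrix_vector_mult_def distrib_left sum.distrib)
  have "integrable M (e i)" for i
    by (rule square_integrable_imp_integrable[OF assms(3,4)])
  note moments = moments_affine_combination_uncorrelated[OF this
      cross_moment_indep_centered(1)[OF assms(2-6)] assms(5) cross_moment_indep_centered(2)[OF assms(2-6)]]
  show "expectation (\<lambda>\<omega>. ridge_est X lam (X *v b + (\<chi> i. e i \<omega>)) $ j)
      = (ridge_gain X lam *v (X *v b)) $ j"
    unfolding affine by (rule moments(1))
  have "(\<Sum>i\<in>UNIV. (ridge_gain X lam $ j $ i)\<^sup>2) = (ridge_gain X lam ** transpose (ridge_gain X lam)) $ j $ j"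
    by (simp add: matrix_matrix_mult_def transpose_def power2_eq_square)
  then show "variance (\<lambda>\<omega>. ridge_est X lam (X *v b + (\<chi> i. e i \<omega>)) $ j)
      = s * (Omega_mat X lam $ j $ j / real CARD('n))"
    unfolding affine moments(2) by (simp add: ridge_gain_gram[OF assms(1)])
qed

lemma ridge_bias_norm_le:
  fixes X :: "real^'p^'n" and sigma :: real
  assumes lam: "lam > 0" and "sigma \<ge> 0" and Om: "Omega_min X lam > 0"
    and hyp: "lam / sqrt (Omega_min X lam) * norm (proj_rows X *v b)
      \<le> sigma / sqrt (real CARD('n)) * lambda_min_nonzero (Sigma_hat X)"
  shows "lam * norm (ridge_resolvent X lam *v (proj_rows X *v b))
    \<le> sigma * sqrt (Omega_min X lam) / sqrt (real CARD('n))" (is "lam * norm ?w \<le> ?r")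
proof (cases "?w = 0")
  case False
  define \<mu> where "\<mu> = lambda_min_nonzero (Sigma_hat X)"
  have "?w \<in> ker_orth (Sigma_hat X)"
    by (rule ridge_resolvent_ker_orth[OF lam proj_rows_in_ker_orth])
  then have "\<mu> > 0"
    unfolding \<mu>_def by (rule lambda_min_nonzero_rayleigh(1)[OF transpose_Sigma_hat Sigma_hat_psd _ False])
  have "\<mu> * (lam * norm ?w) = lam * (\<mu> * norm ?w)" by simp
  also have "\<dots> \<le> lam * norm (proj_rows X *v b)"
    using lambda_min_nonzero_mult_norm_ridge_resolvent[OF lam proj_rows_in_ker_orth] lam
    by (simp add: \<mu>_def)
  also have "\<dots> = sqrt (Omega_min X lam) * (lam / sqrt (Omega_min X lam) * norm (proj_rows X *v b))"
    using Om by simp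
  also have "\<dots> \<le> sqrt (Omega_min X lam) * (sigma / sqrt (real CARD('n)) * \<mu>)"
    using hyp Om by (intro mult_left_mono) (simp_all add: \<mu>_def)
  also have "\<dots> = \<mu> * ?r" by simp
  finally show ?thesis using \<open>\<mu> > 0\<close> by (rule mult_left_le_imp_le)
qed (use assms in simp)

lemma ridge_squared_bias_le:
  fixes X :: "real^'p^'n" and sigma :: real
  assumes lam: "lam > 0" and "sigma \<ge> 0" and Om: "Omega_min X lam > 0"
    and "lam / sqrt (Omega_min X lam) * norm (proj_rows X *v b)
      \<le> sigma / sqrt (real CARD('n)) * lambda_min_nonzero (Sigma_hat X)"
  shows "((ridge_gain X lam *v (X *v b)) $ j - (proj_rows X *v b) $ j)\<^sup>2
    \<le> sigma\<^sup>2 * (Omega_min X lam / real CARD('n))"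
proof -
  define w where "w = ridge_resolvent X lam *v (proj_rows X *v b)"
  define r where "r = sigma * sqrt (Omega_min X lam) / sqrt (real CARD('n))"
  have "((ridge_gain X lam *v (X *v b)) $ j - (proj_rows X *v b) $ j)\<^sup>2 = (lam * w $ j)\<^sup>2"
    using arg_cong[OF ridge_bias[OF lam, where X = X and b = b], of "\<lambda>v. v $ j"]
    by (simp add: w_def)
  also have "\<dots> \<le> r\<^sup>2"
  proof -
    have "\<bar>lam * w $ j\<bar> = lam * \<bar>w $ j\<bar>" using lam by (simp add: abs_mult)
    also have "\<dots> \<le> lam * norm w" using lam by (simp add: component_le_norm_cart)
    also have "\<dots> \<le> r" unfolding w_def r_def by (rule ridge_bias_norm_le[OF assms])
    finally show ?thesis by (metis abs_ge_zero power2_abs power_mono)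
  qed
  also have "\<dots> = sigma\<^sup>2 * (Omega_min X lam / real CARD('n))"
    using Om by (simp add: r_def power_divide power_mult_distrib)
  finally show ?thesis .
qed

theorem corollary1:
  fixes M :: "'a measure"
    and X :: "real^'p^'n"
    and beta0 :: "real^'p"
    and eps :: "'n \<Rightarrow> 'a \<Rightarrow> real"
    and sigma lam :: real
  assumes "prob_space M"
    and "\<And>i. eps i \<in> borel_measurable M"
    and "prob_space.indep_vars M (\<lambda>_. borel) eps UNIV"
    and "\<And>i j. distr M borel (eps i) = distr M borel (eps j)"
    and "\<And>i. integrable M (\<lambda>\<omega>. (eps i \<omega>)\<^sup>2)"
    and "\<And>i. prob_space.expectation M (eps i) = 0"
    and "\<And>i. prob_space.variance M (eps i) = sigma\<^sup>2"
    and "sigma > 0"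
    and "lam > 0"
    and "Omega_min X lam > 0"
    and "lam / sqrt (Omega_min X lam) * norm (proj_rows X *v beta0)
           \<le> sigma / sqrt (real CARD('n)) * lambda_min_nonzero (Sigma_hat X)"
  shows "(let betahat = (\<lambda>\<omega>. ridge_est X lam (X *v beta0 + (\<chi> i. eps i \<omega>)));
              theta0 = proj_rows X *v beta0
          in Max (range (\<lambda>j. (prob_space.expectation M (\<lambda>\<omega>. betahat \<omega> $ j) - theta0 $ j)\<^sup>2))
             \<le> Min (range (\<lambda>j. prob_space.variance M (\<lambda>\<omega>. betahat \<omega> $ j))))"
proof -
  interpret prob_space M by (rule assms(1))
  note moments = ridge_est_moments[OF assms(9,3,2,5,6,7), where b = beta0]
  define bound where "bound = sigma\<^sup>2 * (Omega_min X lam / real CARD('n))"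
  have bias: "(expectation (\<lambda>\<omega>. ridge_est X lam (X *v beta0 + (\<chi> i. eps i \<omega>)) $ j)
      - (proj_rows X *v beta0) $ j)\<^sup>2 \<le> bound" for j
    unfolding moments(1) bound_def
    by (rule ridge_squared_bias_le[OF assms(9) _ assms(10,11)]) (use assms(8) in simp)
  have var: "bound \<le> variance (\<lambda>\<omega>. ridge_est X lam (X *v beta0 + (\<chi> i. eps i \<omega>)) $ k)" for k
  proof -
    have "Omega_min X lam \<le> Omega_mat X lam $ k $ k"
      unfolding Omega_min_def by (rule Min_le) auto
    then show ?thesis
      unfolding moments(2) bound_def by (intro mult_left_mono divide_right_mono) simp_all
  qed
  show ?thesis
    unfolding Let_def using order_trans[OF bias var] by (simp add: Max_le_iff Min_ge_iff)
qed

end
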